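(* Let $\mathcal A,\mathcal B,H$ be groups, $\gamma:\mathcal A\to\mathcal B$ a surjective homomorphism, and $T_\gamma\subseteq\mathcal A$ a section of $\gamma$ (so $\gamma|_{T_\gamma}:T_\gamma\to\mathcal B$ is a bijection). For $\phi\in H^{\mathcal A}$ define $\phi_\gamma\in H^{\mathcal B}$ by $\phi_\gamma(\gamma(x))=\phi(x)$ for $x\in T_\gamma$, and for $\alpha\in\mathcal A$ write $\alpha_\gamma=\gamma(\alpha)$. Let $F$ be the free group on $k+n$ letters, $p\in F$, and $(\bar\phi,\bar\alpha)\in(H\wr\mathcal A)^{k+n}$, with $\bar\phi_\gamma,\bar\alpha_\gamma$ defined coordinatewise. Write $p(\bar\phi,\bar\alpha)=(\psi,p(\bar\alpha))$ with $\psi\in H^{\mathcal A}$ and $p(\bar\phi_\gamma,\bar\alpha_\gamma)=(\tilde\psi,\gamma(p(\bar\alpha)))$ with $\tilde\psi\in H^{\mathcal B}$. Let $S=\mathrm{Suf}(p)$. If $x\in\mathcal A$ satisfies $xS(\bar\alpha)\subseteq T_\gamma$, then $\psi(x)=\tilde\psi(\gamma(x))$.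
   Context: For a reduced word $p$ in the free group, $\mathrm{Suf}(p)$ denotes the set of all initial subwords of $p$ (including the empty word $1$ and $p$ itself); e.g. $\mathrm{Suf}(x^2yx^{-1})=\{1,x,x^2,x^2y,x^2yx^{-1}\}$. For $S\subseteq F$ and $\bar\alpha\in\mathcal A^{k+n}$, $S(\bar\alpha)=\{q(\bar\alpha): q\in S\}$. The wreath product $H\wr Q$ is $H^Q\rtimes Q$ with $(g.f)(x)=f(xg)$ and multiplication $(f,g)(f',g')=(f\,(g.f'),gg')$; for $\bar\phi=(\phi_1,\dots,\phi_{k+n})$ and $\bar\alpha=(\alpha_1,\dots,\alpha_{k+n})$, $(\bar\phi,\bar\alpha)$ denotes $((\phi_1,\alpha_1),\dots,(\phi_{k+n},\alpha_{k+n}))$. *)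

theory Defs
  imports Main
begin

text \<open>Groups are modelled by the (not necessarily commutative) type class group_add;
  the group operation is written additively: x + y stands for the product x y,
  -x for the inverse, 0 for the identity.\<close>

text \<open>Letters of the free group: (i, False) is the generator x_i, (i, True) is x_i^{-1}.
  Elements of the free group are reduced words.\<close>
type_synonym letter = "nat \<times> bool"

definition reduced :: "letter list \<Rightarrow> bool" where
  "reduced w \<longleftrightarrow> (\<forall>j. Suc j < length w \<longrightarrow>
       \<not> (fst (w ! j) = fst (w ! Suc j) \<and> snd (w ! j) \<noteq> snd (w ! Suc j)))"

definition free_word :: "nat \<Rightarrow> letter list \<Rightarrow> bool" where
  "free_word m w \<longleftrightarrow> reduced w \<and> (\<forall>l\<in>set w. fst l < m)"

definition Suf :: "letter list \<Rightarrow> letter list set" where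
  "Suf p = {take i p | i. i \<le> length p}"

fun word_eval :: "('g \<Rightarrow> 'g \<Rightarrow> 'g) \<Rightarrow> ('g \<Rightarrow> 'g) \<Rightarrow> 'g \<Rightarrow> (nat \<Rightarrow> 'g) \<Rightarrow> letter list \<Rightarrow> 'g" where
  "word_eval mul iv e a [] = e"
| "word_eval mul iv e a (l # w) =
     mul (if snd l then iv (a (fst l)) else a (fst l)) (word_eval mul iv e a w)"

abbreviation geval :: "(nat \<Rightarrow> 'g::group_add) \<Rightarrow> letter list \<Rightarrow> 'g" where
  "geval a w \<equiv> word_eval (+) uminus 0 a w"

text \<open>Wreath product H wr Q = H^Q \<rtimes> Q with (g.f)(x) = f(x g) and
  (f,g)(f',g') = (f (g.f'), g g').\<close>
definition wr_mult :: "('q \<Rightarrow> 'h::group_add) \<times> 'q::group_add \<Rightarrow> ('q \<Rightarrow> 'h) \<times> 'q \<Rightarrow> ('q \<Rightarrow> 'h) \<times> 'q" where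
  "wr_mult u v = ((\<lambda>x. fst u x + fst v (x + snd u)), snd u + snd v)"

definition wr_one :: "('q \<Rightarrow> 'h::group_add) \<times> 'q::group_add" where
  "wr_one = ((\<lambda>x. 0), 0)"

definition wr_inv :: "('q \<Rightarrow> 'h::group_add) \<times> 'q::group_add \<Rightarrow> ('q \<Rightarrow> 'h) \<times> 'q" where
  "wr_inv u = ((\<lambda>y. - fst u (y - snd u)), - snd u)"

abbreviation wr_eval :: "(nat \<Rightarrow> ('q \<Rightarrow> 'h::group_add) \<times> 'q::group_add) \<Rightarrow> letter list \<Rightarrow> ('q \<Rightarrow> 'h) \<times> 'q" where
  "wr_eval a w \<equiv> word_eval wr_mult wr_inv wr_one a w"

definition sec_fun :: "('a \<Rightarrow> 'b) \<Rightarrow> 'a set \<Rightarrow> ('a \<Rightarrow> 'h) \<Rightarrow> 'b \<Rightarrow> 'h" where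
  "sec_fun \<gamma> T \<phi> = (\<lambda>b. \<phi> (the_inv_into T \<gamma> b))"

end

theory Submission
  imports Defs "HOL-Library.Sublist"
begin

text \<open>Reading p letter by letter, the first coordinate of p(phi, alpha) at x is a product
  of values phi_i(y) at the points y = x q(alpha) with q a prefix of p (for an inverse
  letter the point is shifted back by alpha_i, which is again such a point). All these
  points lie in T, where phi_gamma(gamma y) = phi(y); since gamma is a homomorphism, the
  computation of p(phi_gamma, alpha_gamma) at gamma(x) tracks the one at x step by step.
  The relation agrees_at is the invariant of this induction.\<close>

lemma additive_zero:
  fixes \<gamma> :: "'a::group_add \<Rightarrow> 'b::group_add"
  assumes hom: "\<And>u v. \<gamma> (u + v) = \<gamma> u + \<gamma> v"
  shows "\<gamma> 0 = 0"
proof -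
  have "\<gamma> 0 + \<gamma> 0 = \<gamma> (0 + 0)" by (rule hom[symmetric])
  also have "\<dots> = \<gamma> 0 + 0" by simp
  finally show ?thesis by (rule add_left_imp_eq)
qed

lemma additive_minus:
  fixes \<gamma> :: "'a::group_add \<Rightarrow> 'b::group_add"
  assumes hom: "\<And>u v. \<gamma> (u + v) = \<gamma> u + \<gamma> v"
  shows "\<gamma> (- u) = - \<gamma> u"
proof (rule minus_unique[symmetric])
  have "\<gamma> u + \<gamma> (- u) = \<gamma> (u + - u)" by (rule hom[symmetric])
  then show "\<gamma> u + \<gamma> (- u) = 0" by (simp add: additive_zero[OF hom])
qed

lemma additive_diff:
  fixes \<gamma> :: "'a::group_add \<Rightarrow> 'b::group_add"
  assumes hom: "\<And>u v. \<gamma> (u + v) = \<gamma> u + \<gamma> v"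
  shows "\<gamma> (u - v) = \<gamma> u - \<gamma> v"
  using hom[of u "- v"] by (simp add: additive_minus[OF hom])

lemma sec_fun_apply:
  assumes "inj_on \<gamma> T" and "y \<in> T"
  shows "sec_fun \<gamma> T f (\<gamma> y) = f y"
  unfolding sec_fun_def using assms by (simp add: the_inv_into_f_f)

lemma Suf_eq_prefixes: "Suf p = {q. prefix q p}"
  unfolding Suf_def
  by (auto simp: take_is_prefix) (metis prefix_def append_eq_conv_conj prefix_length_le)

definition agrees_at :: "('a \<Rightarrow> 'b) \<Rightarrow> 'a \<Rightarrow> ('a \<Rightarrow> 'h) \<times> 'a \<Rightarrow> ('b \<Rightarrow> 'h) \<times> 'b \<Rightarrow> bool" where
  "agrees_at \<gamma> x u v \<longleftrightarrow> fst u x = fst v (\<gamma> x) \<and> snd v = \<gamma> (snd u)"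

lemma agrees_at_wr_one:
  fixes \<gamma> :: "'a::group_add \<Rightarrow> 'b::group_add"
  assumes hom: "\<And>u v. \<gamma> (u + v) = \<gamma> u + \<gamma> v"
  shows "agrees_at \<gamma> x (wr_one :: ('a \<Rightarrow> 'h::group_add) \<times> 'a) wr_one"
  by (simp add: agrees_at_def wr_one_def additive_zero[OF hom])

lemma agrees_at_wr_mult:
  fixes \<gamma> :: "'a::group_add \<Rightarrow> 'b::group_add"
    and u v :: "('a \<Rightarrow> 'h::group_add) \<times> 'a"
  assumes hom: "\<And>u v. \<gamma> (u + v) = \<gamma> u + \<gamma> v"
    and u: "agrees_at \<gamma> x u u'"
    and v: "agrees_at \<gamma> (x + snd u) v v'"
  shows "agrees_at \<gamma> x (wr_mult u v) (wr_mult u' v')"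
  using u v by (simp add: agrees_at_def wr_mult_def hom)

lemma agrees_at_wr_inv:
  fixes \<gamma> :: "'a::group_add \<Rightarrow> 'b::group_add"
    and u :: "('a \<Rightarrow> 'h::group_add) \<times> 'a"
  assumes hom: "\<And>u v. \<gamma> (u + v) = \<gamma> u + \<gamma> v"
    and u: "agrees_at \<gamma> (x - snd u) u u'"
  shows "agrees_at \<gamma> x (wr_inv u) (wr_inv u')"
  using u by (simp add: agrees_at_def wr_inv_def additive_minus[OF hom] additive_diff[OF hom])

lemma agrees_at_sec_fun:
  assumes "inj_on \<gamma> T" and "x \<in> T"
  shows "agrees_at \<gamma> x (f, a) (sec_fun \<gamma> T f, \<gamma> a)"
  using assms by (simp add: agrees_at_def sec_fun_apply)

lemma agrees_at_wr_eval_sec_fun: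
  fixes \<gamma> :: "'a::group_add \<Rightarrow> 'b::group_add"
    and \<phi> :: "nat \<Rightarrow> 'a \<Rightarrow> 'h::group_add"
  assumes hom: "\<And>u v. \<gamma> (u + v) = \<gamma> u + \<gamma> v"
    and inj: "inj_on \<gamma> T"
    and prefixes_in_T: "\<forall>q. prefix q p \<longrightarrow> x + geval \<alpha> q \<in> T"
  shows "agrees_at \<gamma> x (wr_eval (\<lambda>i. (\<phi> i, \<alpha> i)) p)
           (wr_eval (\<lambda>i. (sec_fun \<gamma> T (\<phi> i), \<gamma> (\<alpha> i))) p)"
  using prefixes_in_T
proof (induction p arbitrary: x)
  case Nil
  then show ?case by (simp add: agrees_at_wr_one[OF hom])
next
  case (Cons l w)
  obtain i b where l: "l = (i, b)" by fastforce
  let ?u = "(\<phi> i, \<alpha> i)" and ?u' = "(sec_fun \<gamma> T (\<phi> i), \<gamma> (\<alpha> i))"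
  let ?c = "if b then - \<alpha> i else \<alpha> i"
  have head: "agrees_at \<gamma> x (if b then wr_inv ?u else ?u) (if b then wr_inv ?u' else ?u')"
  proof (cases b)
    case True
    have "x - \<alpha> i \<in> T" using Cons.prems[rule_format, of "[l]"] by (simp add: l True)
    then show ?thesis
      using True by (simp add: agrees_at_wr_inv[OF hom] agrees_at_sec_fun[OF inj])
  next
    case False
    have "x \<in> T" using Cons.prems[rule_format, of "[]"] by simp
    then show ?thesis using False by (simp add: agrees_at_sec_fun[OF inj])
  qed
  have "\<forall>q. prefix q w \<longrightarrow> x + ?c + geval \<alpha> q \<in> T"
  proof (intro allI impI)
    fix q
    assume "prefix q w"
    then show "x + ?c + geval \<alpha> q \<in> T"
      using Cons.prems[rule_format, of "l # q"]
      by (cases b) (simp_all add: l add.assoc[symmetric])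
  qed
  then have tail: "agrees_at \<gamma> (x + ?c) (wr_eval (\<lambda>i. (\<phi> i, \<alpha> i)) w)
                     (wr_eval (\<lambda>i. (sec_fun \<gamma> T (\<phi> i), \<gamma> (\<alpha> i))) w)"
    by (rule Cons.IH)
  have "snd (if b then wr_inv ?u else ?u) = ?c" by (simp add: wr_inv_def)
  with tail have "agrees_at \<gamma> x
      (wr_mult (if b then wr_inv ?u else ?u) (wr_eval (\<lambda>i. (\<phi> i, \<alpha> i)) w))
      (wr_mult (if b then wr_inv ?u' else ?u')
        (wr_eval (\<lambda>i. (sec_fun \<gamma> T (\<phi> i), \<gamma> (\<alpha> i))) w))"
    by (intro agrees_at_wr_mult[OF hom head]) simp
  then show ?case by (cases b) (simp_all add: l)
qed

theorem lemma3:
  fixes \<gamma> :: "'a::group_add \<Rightarrow> 'b::group_add"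
    and T :: "'a set"
    and \<phi> :: "nat \<Rightarrow> 'a \<Rightarrow> 'h::group_add"
    and \<alpha> :: "nat \<Rightarrow> 'a"
    and k n :: nat
    and p :: "letter list"
    and x :: 'a
  assumes hom: "\<And>u v. \<gamma> (u + v) = \<gamma> u + \<gamma> v"
    and surj: "surj \<gamma>"
    and sec: "bij_betw \<gamma> T UNIV"
    and p: "free_word (k + n) p"
    and xS: "\<forall>q\<in>Suf p. x + geval \<alpha> q \<in> T"
  shows "fst (wr_eval (\<lambda>i. (\<phi> i, \<alpha> i)) p) x
       = fst (wr_eval (\<lambda>i. (sec_fun \<gamma> T (\<phi> i), \<gamma> (\<alpha> i))) p) (\<gamma> x)"
proof -
  have "inj_on \<gamma> T" using sec by (rule bij_betw_imp_inj_on)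
  moreover have "\<forall>q. prefix q p \<longrightarrow> x + geval \<alpha> q \<in> T"
    using xS by (simp add: Suf_eq_prefixes)
  ultimately show ?thesis
    using agrees_at_wr_eval_sec_fun[OF hom, of T p x \<alpha> \<phi>] by (simp add: agrees_at_def)
qed

end
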